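(* For all $m\geq 1$ and $n\in\mathbb N$, \[ s_{n,m}(122,132)=\frac{1}{mn+1}\binom{(m+1)n}{n}. \]
   Context: $[n]_m=\{1^m,\ldots,n^m\}$; a permutation of $[n]_m$ is a sequence of length $nm$ in which each element of $[n]$ appears exactly $m$ times. A sequence avoids a pattern $\pi$ if it has no subsequence order-isomorphic to $\pi$ (same relative order and same equalities among entries). $s_{n,m}(\Pi)$ is the number of permutations of $[n]_m$ avoiding all patterns in $\Pi$. *)

theory Defs
  imports Complex_Main "HOL-Library.Sublist"
begin

definition order_iso :: "nat list \<Rightarrow> nat list \<Rightarrow> bool" where
  "order_iso u v \<longleftrightarrow> length u = length v \<and>
     (\<forall>i < length u. \<forall>j < length u. (u ! i < u ! j \<longleftrightarrow> v ! i < v ! j))"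

definition contains_pattern :: "nat list \<Rightarrow> nat list \<Rightarrow> bool" where
  "contains_pattern w p \<longleftrightarrow> (\<exists>u. subseq u w \<and> order_iso u p)"

definition avoids_all :: "nat list \<Rightarrow> nat list set \<Rightarrow> bool" where
  "avoids_all w P \<longleftrightarrow> (\<forall>p\<in>P. \<not> contains_pattern w p)"

definition multiperms :: "nat \<Rightarrow> nat \<Rightarrow> nat list set" where
  "multiperms n m = {w. length w = n * m \<and> set w \<subseteq> {1..n} \<and>
                        (\<forall>i\<in>{1..n}. count_list w i = m)}"

definition s_count :: "nat \<Rightarrow> nat \<Rightarrow> nat list set \<Rightarrow> nat" where
  "s_count n m P = card {w \<in> multiperms n m. avoids_all w P}"

end

theory Submission
  imports Defs
begin

(* We then generalise the count: avoiders m h k is the set of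
   avoiding words over {0..k} in which each of 1..k occurs m times and the
   extra letter 0 occurs h times; the theorem is the case h = 0, k = n.

   These sets satisfy a recursion obtained from two bijections on the words
   with k+1 nonzero letters:
   - words in which no 0 precedes a 1 correspond (by merging the letters 0 and
     1, i.e. decrementing every entry) to avoiders m (h+m) k;
   - in a word in which some 0 precedes a 1, a 0 sits immediately before the
     last 1, and deleting it is a bijection onto avoiders m (h-1) (k+1).
   The closed form (h+1)/((m+1)k+h+1) * binom((m+1)k+h+1, k) satisfies the
   same recursion (a binomial identity), which gives the count by induction;
   a final binomial absorption converts the case h = 0 to the stated form. *)

(* The letter 1 plays a special role below; keep the numeral 1 from being
   rewritten to Suc 0 so that lemmas about it apply by simplification. *)
declare One_nat_def [simp del]

(* The entries a, b, c (in this order) form an occurrence of 122 or of 132. *)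
definition forbidden_triple :: "nat \<Rightarrow> nat \<Rightarrow> nat \<Rightarrow> bool" where
  "forbidden_triple a b c \<longleftrightarrow> (a < b \<and> b = c) \<or> (a < c \<and> c < b)"

definition avoids_122_132 :: "nat list \<Rightarrow> bool" where
  "avoids_122_132 w \<longleftrightarrow> (\<forall>a b c. subseq [a,b,c] w \<longrightarrow> \<not> forbidden_triple a b c)"

lemma order_iso_122: "order_iso [a,b,c] [1,2,2] \<longleftrightarrow> a < b \<and> b = c"
  unfolding order_iso_def by (simp add: less_Suc_eq numeral_eq_Suc all_conj_distrib) linarith

lemma order_iso_132: "order_iso [a,b,c] [1,3,2] \<longleftrightarrow> a < c \<and> c < b"
  unfolding order_iso_def by (auto simp: less_Suc_eq numeral_eq_Suc)

(* Only subsequences of the pattern's length can be order-isomorphic to it. *)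
lemma contains_pattern_length3:
  "contains_pattern w [x,y,z] \<longleftrightarrow> (\<exists>a b c. subseq [a,b,c] w \<and> order_iso [a,b,c] [x,y,z])"
proof
  assume "contains_pattern w [x,y,z]"
  then obtain u where u: "subseq u w" "order_iso u [x,y,z]"
    unfolding contains_pattern_def by blast
  then have "length u = 3" unfolding order_iso_def by simp
  then obtain a b c where "u = [a,b,c]" by (auto simp: numeral_eq_Suc length_Suc_conv)
  with u show "\<exists>a b c. subseq [a,b,c] w \<and> order_iso [a,b,c] [x,y,z]" by blast
qed (auto simp: contains_pattern_def)

lemma avoids_all_iff: "avoids_all w {[1,2,2],[1,3,2]} \<longleftrightarrow> avoids_122_132 w"
proof -
  have "avoids_all w {[1,2,2],[1,3,2]} \<longleftrightarrow>
      \<not> contains_pattern w [1,2,2] \<and> \<not> contains_pattern w [1,3,2]"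
    unfolding avoids_all_def by blast
  then show ?thesis
    unfolding contains_pattern_length3 order_iso_122 order_iso_132
      avoids_122_132_def forbidden_triple_def by blast
qed

lemma avoids_subseq: "subseq v w \<Longrightarrow> avoids_122_132 w \<Longrightarrow> avoids_122_132 v"
  unfolding avoids_122_132_def using subseq_order.order_trans by blast

lemma set_subseq: "subseq xs ys \<Longrightarrow> set xs \<subseteq> set ys"
  by (auto elim: list_emb_set)

lemma subseq_map_inv: "subseq xs (map f ys) \<Longrightarrow> \<exists>zs. subseq zs ys \<and> xs = map f zs"
proof (induction ys arbitrary: xs)
  case (Cons y ys)
  show ?case
  proof (cases "xs \<noteq> [] \<and> hd xs = f y")
    case True
    then obtain xs' where xs: "xs = f y # xs'" by (cases xs) auto
    with Cons.prems have "subseq xs' (map f ys)" by simp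
    with Cons.IH obtain zs where "subseq zs ys" "xs' = map f zs" by blast
    with xs show ?thesis by (intro exI[of _ "y # zs"]) auto
  next
    case False
    with Cons.prems have "subseq xs (map f ys)" by (cases xs) auto
    with Cons.IH show ?thesis by (meson list_emb_Cons)
  qed
qed auto

lemma subseq_through_entry:
  assumes "subseq xs (X @ z # Z)"
  shows "subseq xs (X @ Z) \<or> (\<exists>us vs. xs = us @ z # vs \<and> subseq us X \<and> subseq vs Z)"
proof -
  from assms obtain us ws where us: "xs = us @ ws" "subseq us X" and ws: "subseq ws (z # Z)"
    by (rule subseq_appendE)
  show ?thesis
  proof (cases "subseq ws Z")
    case True
    with us show ?thesis using list_emb_append_mono by blast
  next
    case False
    with ws obtain vs where "ws = z # vs" "subseq vs Z"
      by (cases ws) (auto split: if_splits)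
    with us show ?thesis by blast
  qed
qed

section \<open>The generalised sets of avoiders\<close>

definition avoiders :: "nat \<Rightarrow> nat \<Rightarrow> nat \<Rightarrow> nat list set" where
  "avoiders m h k = {w. length w = h + m * k \<and> set w \<subseteq> {0..k} \<and> count_list w 0 = h \<and>
      (\<forall>i\<in>{1..k}. count_list w i = m) \<and> avoids_122_132 w}"

lemma finite_avoiders: "finite (avoiders m h k)"
proof (rule finite_subset)
  show "avoiders m h k \<subseteq> {w. set w \<subseteq> {0..k} \<and> length w = h + m * k}"
    unfolding avoiders_def by auto
qed (rule finite_lists_length_eq, simp)

lemma s_count_eq_card_avoiders: "s_count n m {[1,2,2],[1,3,2]} = card (avoiders m 0 n)"
proof -
  have letters: "set w \<subseteq> {1..n} \<longleftrightarrow> set w \<subseteq> {0..n} \<and> count_list w 0 = 0"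
    for w :: "nat list"
    by (auto simp: count_list_0_iff subset_iff One_nat_def Suc_le_eq intro: gr0I)
  have "{w \<in> multiperms n m. avoids_all w {[1,2,2],[1,3,2]}} = avoiders m 0 n"
    unfolding multiperms_def avoiders_def avoids_all_iff letters by (auto simp: mult.commute)
  then show ?thesis unfolding s_count_def by simp
qed

lemma avoiders_0: "avoiders m h 0 = {replicate h 0}"
proof
  show "avoiders m h 0 \<subseteq> {replicate h 0}"
    unfolding avoiders_def by (auto intro!: replicate_eqI)
  have "avoids_122_132 (replicate h 0)"
    unfolding avoids_122_132_def forbidden_triple_def
    by (auto dest!: set_subseq split: if_splits)
  moreover have "count_list (replicate h 0) 0 = h" by (induction h) auto
  ultimately show "{replicate h 0} \<subseteq> avoiders m h 0"
    unfolding avoiders_def by auto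
qed

section \<open>Merging the letters 0 and 1\<close>

(* Decrementing every entry merges the letters 0 and 1. *)
abbreviation lower :: "nat list \<Rightarrow> nat list" where
  "lower \<equiv> map (\<lambda>x. x - 1)"

lemma count_list_lower:
  "count_list (lower w) i = (if i = 0 then count_list w 0 + count_list w 1 else count_list w (Suc i))"
  by (induction w) auto

lemma forbidden_triple_of_lower:
  "forbidden_triple (a - 1) (b - 1) (c - 1) \<Longrightarrow> forbidden_triple a b c"
  unfolding forbidden_triple_def by presburger

lemma forbidden_triple_lower:
  "forbidden_triple a b c \<Longrightarrow> (a = 0 \<longrightarrow> b \<noteq> 1 \<and> c \<noteq> 1) \<Longrightarrow>
    forbidden_triple (a - 1) (b - 1) (c - 1)"
  unfolding forbidden_triple_def by (cases a) auto

lemma map_eq_triple: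
  "[a,b,c] = map f zs \<Longrightarrow> \<exists>a' b' c'. zs = [a',b',c'] \<and> a = f a' \<and> b = f b' \<and> c = f c'"
  by (cases zs rule: list.exhaust; simp; rename_tac z zs'; case_tac zs'; simp;
      rename_tac z2 zs2; case_tac zs2; simp)

lemma avoids_lower: "avoids_122_132 w \<Longrightarrow> avoids_122_132 (lower w)"
  unfolding avoids_122_132_def
proof (intro allI impI)
  fix a b c
  assume w: "\<forall>a b c. subseq [a,b,c] w \<longrightarrow> \<not> forbidden_triple a b c"
    and S: "subseq [a,b,c] (lower w)"
  obtain zs where zs: "subseq zs w" "[a,b,c] = lower zs"
    using subseq_map_inv[OF S] by metis
  then obtain a' b' c' where abc: "zs = [a',b',c']" "a = a' - 1" "b = b' - 1" "c = c' - 1"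
    using map_eq_triple[OF zs(2)] by metis
  from zs(1) abc(1) w have "\<not> forbidden_triple a' b' c'" by simp
  then show "\<not> forbidden_triple a b c"
    unfolding abc(2-4) using forbidden_triple_of_lower[of a' b' c'] by blast
qed

lemma avoids_of_lower:
  assumes "avoids_122_132 (lower w)" and no01: "\<not> subseq [0,1] w"
  shows "avoids_122_132 w"
  unfolding avoids_122_132_def
proof (intro allI impI)
  fix a b c assume abc: "subseq [a,b,c] w"
  then have "subseq [a - 1, b - 1, c - 1] (lower w)" using subseq_map by fastforce
  with assms(1) have "\<not> forbidden_triple (a - 1) (b - 1) (c - 1)"
    unfolding avoids_122_132_def by blast
  moreover have "subseq [a,b] w" "subseq [a,c] w"
    using abc subseq_order.order_trans[of _ "[a,b,c]" w] by auto
  with no01 have "a = 0 \<longrightarrow> b \<noteq> 1 \<and> c \<noteq> 1" by blast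
  ultimately show "\<not> forbidden_triple a b c" using forbidden_triple_lower by blast
qed

(* Inverse of lower on words with no 0 before a 1 and c ones: the first c zeros
   become ones, and every nonzero entry is incremented. *)
fun unmerge :: "nat \<Rightarrow> nat list \<Rightarrow> nat list" where
  "unmerge c [] = []"
| "unmerge c (x # xs) =
    (if x = 0 then (if c > 0 then 1 # unmerge (c - 1) xs else 0 # unmerge c xs)
     else Suc x # unmerge c xs)"

lemma lower_unmerge: "lower (unmerge c v) = v"
  by (induction c v rule: unmerge.induct) auto

lemma length_unmerge: "length (unmerge c v) = length v"
  by (induction c v rule: unmerge.induct) auto

lemma count_list_unmerge:
  "count_list (unmerge c v) 0 = count_list v 0 - c"
  "count_list (unmerge c v) 1 = min c (count_list v 0)"
  "i \<ge> 1 \<Longrightarrow> count_list (unmerge c v) (Suc i) = count_list v i"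
  by (induction c v rule: unmerge.induct) (auto simp: One_nat_def)

lemma set_unmerge: "set v \<subseteq> {0..k} \<Longrightarrow> set (unmerge c v) \<subseteq> {0..Suc k}"
  by (induction c v rule: unmerge.induct) auto

lemma no_01_unmerge: "\<not> subseq [0,1] (unmerge c v)"
proof (induction c v rule: unmerge.induct)
  case (2 c x xs)
  have "1 \<notin> set (unmerge 0 xs)" by (induction xs) auto
  with 2 show ?case by (auto simp: subseq_singleton_left)
qed simp

lemma unmerge_lower: "\<not> subseq [0,1] w \<Longrightarrow> unmerge (count_list w 1) (lower w) = w"
proof (induction w)
  case (Cons x xs)
  then have "\<not> subseq [0,1] xs" and "x = 0 \<Longrightarrow> count_list xs 1 = 0"
    by (auto simp: subseq_singleton_left count_list_0_iff split: if_splits dest: subseq_Cons')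
  with Cons.IH show ?case by auto
qed simp

lemma ball_atLeastAtMost_Suc: "(\<forall>i\<in>{1..Suc k}. P i) \<longleftrightarrow> P 1 \<and> (\<forall>i\<in>{1..k}. P (Suc i))"
proof -
  have "{1..Suc k} = insert 1 (Suc ` {1..k})"
    by (auto simp: image_iff One_nat_def)
  then show ?thesis by (simp only: ball_simps)
qed

lemma lower_mem_avoiders:
  assumes "w \<in> avoiders m h (Suc k)" "\<not> subseq [0,1] w"
  shows "lower w \<in> avoiders m (h + m) k"
  using assms avoids_lower unfolding avoiders_def ball_atLeastAtMost_Suc
  by (auto simp: count_list_lower)

lemma unmerge_mem_avoiders:
  assumes "v \<in> avoiders m (h + m) k"
  shows "unmerge m v \<in> avoiders m h (Suc k)"
  using assms set_unmerge avoids_of_lower[OF _ no_01_unmerge] lower_unmerge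
  unfolding avoiders_def ball_atLeastAtMost_Suc
  by (auto simp: length_unmerge count_list_unmerge)

lemma card_avoiders_without_01:
  "card {w \<in> avoiders m h (Suc k). \<not> subseq [0,1] w} = card (avoiders m (h + m) k)"
proof (rule bij_betw_same_card)
  let ?A = "{w \<in> avoiders m h (Suc k). \<not> subseq [0,1] w}"
  have ones: "count_list w 1 = m" if "w \<in> avoiders m h (Suc k)" for w
    using that unfolding avoiders_def by auto
  show "bij_betw lower ?A (avoiders m (h + m) k)"
  proof (rule bij_betw_byWitness[where f' = "unmerge m"])
    show "\<forall>w\<in>?A. unmerge m (lower w) = w"
      using unmerge_lower ones by fastforce
    show "\<forall>v\<in>avoiders m (h + m) k. lower (unmerge m v) = v"
      using lower_unmerge by blast
    show "lower ` ?A \<subseteq> avoiders m (h + m) k"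
      using lower_mem_avoiders by blast
    show "unmerge m ` avoiders m (h + m) k \<subseteq> ?A"
      using unmerge_mem_avoiders no_01_unmerge by blast
  qed
qed

section \<open>Removing a 0 before the last 1\<close>

fun insert_zero :: "nat list \<Rightarrow> nat list" where
  "insert_zero [] = []"
| "insert_zero (x # xs) = (if x = 1 \<and> 1 \<notin> set xs then 0 # 1 # xs else x # insert_zero xs)"

lemma insert_zero_split: "1 \<notin> set Y \<Longrightarrow> insert_zero (X @ 1 # Y) = X @ 0 # 1 # Y"
  by (induction X) auto

lemma split_last_unique:
  "X1 @ a # Y1 = X2 @ a # Y2 \<Longrightarrow> a \<notin> set Y1 \<Longrightarrow> a \<notin> set Y2 \<Longrightarrow> X1 = X2 \<and> Y1 = Y2"
proof (induction X1 arbitrary: X2)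
  case Nil then show ?case by (cases X2) auto
next
  case (Cons x X1) then show ?case by (cases X2) auto
qed

(* The new 0 can only start a forbidden triple (0, b, c) with b, c after it; such a
   triple would give the forbidden triple (1, b, c) through the last 1. *)
lemma avoids_insert_zero:
  assumes av: "avoids_122_132 (X @ 1 # Y)" and Y: "1 \<notin> set Y"
  shows "avoids_122_132 (X @ 0 # 1 # Y)"
  unfolding avoids_122_132_def
proof (intro allI impI notI)
  fix a b c
  assume S: "subseq [a,b,c] (X @ 0 # 1 # Y)" and F: "forbidden_triple a b c"
  have bc: "b \<noteq> 0" "c \<noteq> 0" using F unfolding forbidden_triple_def by auto
  from subseq_through_entry[OF S] show False
  proof
    assume "subseq [a,b,c] (X @ 1 # Y)"
    with av F show False unfolding avoids_122_132_def by blast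
  next
    assume "\<exists>us vs. [a,b,c] = us @ 0 # vs \<and> subseq us X \<and> subseq vs (1 # Y)"
    then obtain us vs where "[a,b,c] = us @ 0 # vs" "subseq vs (1 # Y)" by blast
    with bc have a: "a = 0" and "subseq [b,c] (1 # Y)"
      by (cases us; auto simp: Cons_eq_append_conv)+
    then consider "b = 1" "c \<in> set Y" | "subseq [b,c] Y"
      by (auto split: if_splits simp: subseq_singleton_left)
    then show False
    proof cases
      case 1
      with Y F a show False unfolding forbidden_triple_def by auto
    next
      case 2
      then have "c \<in> set Y" using set_subseq by fastforce
      with Y have "c \<noteq> 1" by blast
      with bc F a have "forbidden_triple 1 b c" unfolding forbidden_triple_def by presburger
      moreover from 2 have "subseq [1,b,c] (X @ 1 # Y)" by (simp add: subseq_drop_many)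
      ultimately show False using av unfolding avoids_122_132_def by blast
    qed
  qed
qed

(* If an avoider has a 0 before a 1, then a 0 sits right before its last 1:
   otherwise (0, x, 1) with x > 1 the entry before the last 1 would form 132. *)
lemma zero_before_last_one:
  assumes av: "avoids_122_132 (X @ 1 # Y)" and Y: "1 \<notin> set Y"
    and S: "subseq [0,1] (X @ 1 # Y)"
  shows "\<exists>X'. X = X' @ [0]"
proof -
  from S obtain us vs where uv: "[0,1] = us @ vs" "subseq us X" "subseq vs (1 # Y)"
    by (rule subseq_appendE)
  have "0 \<in> set X"
  proof (cases us)
    case Nil
    (* the whole pattern 0 1 would lie in 1 # Y, forcing a 1 into Y *)
    with uv have "subseq [1] Y" by (auto dest: subseq_Cons')
    with Y show ?thesis by (simp add: subseq_singleton_left)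
  next
    case (Cons u us')
    with uv show ?thesis by (auto dest!: set_subseq)
  qed
  then obtain X0 x where X: "X = X0 @ [x]" by (metis empty_iff list.set(1) rev_exhaust)
  show ?thesis
  proof (cases "x = 0")
    case False
    with \<open>0 \<in> set X\<close> X have "subseq [0] X0" by (auto simp: subseq_singleton_left)
    then have "subseq ([0] @ [x,1]) (X0 @ ([x] @ 1 # Y))"
      by (rule list_emb_append_mono) simp
    moreover have "forbidden_triple 0 x 1" using False unfolding forbidden_triple_def by auto
    ultimately show ?thesis using av X unfolding avoids_122_132_def by auto
  qed (use X in blast)
qed

lemma one_mem_avoiders: "m \<ge> 1 \<Longrightarrow> v \<in> avoiders m h (Suc k) \<Longrightarrow> 1 \<in> set v"
  unfolding avoiders_def using count_list_0_iff[of v 1] by force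

lemma insert_zero_mem_avoiders:
  assumes "X @ 1 # Y \<in> avoiders m h k" "1 \<notin> set Y"
  shows "X @ 0 # 1 # Y \<in> avoiders m (Suc h) k \<and> subseq [0,1] (X @ 0 # 1 # Y)"
  using assms avoids_insert_zero unfolding avoiders_def by (auto simp: subseq_drop_many)

lemma delete_zero_mem_avoiders:
  assumes "X @ 0 # 1 # Y \<in> avoiders m (Suc h) k"
  shows "X @ 1 # Y \<in> avoiders m h k"
proof -
  have "subseq (X @ 1 # Y) (X @ 0 # 1 # Y)" by (simp add: list_emb_append_mono)
  with assms show ?thesis unfolding avoiders_def by (auto dest: avoids_subseq)
qed

lemma card_avoiders_with_01:
  assumes m: "m \<ge> 1"
  shows "card {w \<in> avoiders m (Suc h) (Suc k). subseq [0,1] w} = card (avoiders m h (Suc k))"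
proof -
  have split: "\<exists>X Y. v = X @ 1 # Y \<and> 1 \<notin> set Y" if "v \<in> avoiders m h (Suc k)" for v h
    using split_list_last[OF one_mem_avoiders[OF m that]] by blast
  have inj: "inj_on insert_zero (avoiders m h (Suc k))"
  proof
    fix v1 v2 assume "v1 \<in> avoiders m h (Suc k)" "v2 \<in> avoiders m h (Suc k)"
      and eq: "insert_zero v1 = insert_zero v2"
    then obtain X1 Y1 X2 Y2 where v: "v1 = X1 @ 1 # Y1" "1 \<notin> set Y1" "v2 = X2 @ 1 # Y2" "1 \<notin> set Y2"
      using split by meson
    with eq have "(X1 @ [0]) @ 1 # Y1 = (X2 @ [0]) @ 1 # Y2" by (simp add: insert_zero_split)
    from split_last_unique[OF this v(2,4)] v(1,3) show "v1 = v2" by simp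
  qed
  have "insert_zero ` avoiders m h (Suc k) = {w \<in> avoiders m (Suc h) (Suc k). subseq [0,1] w}"
  proof (intro equalityI subsetI)
    fix w assume "w \<in> insert_zero ` avoiders m h (Suc k)"
    then obtain v where v: "v \<in> avoiders m h (Suc k)" "w = insert_zero v" by blast
    from split[OF v(1)] obtain X Y where "v = X @ 1 # Y" "1 \<notin> set Y" by blast
    with v insert_zero_mem_avoiders[of X Y m h "Suc k"]
    show "w \<in> {w \<in> avoiders m (Suc h) (Suc k). subseq [0,1] w}"
      by (simp add: insert_zero_split)
  next
    fix w assume w: "w \<in> {w \<in> avoiders m (Suc h) (Suc k). subseq [0,1] w}"
    then have "1 \<in> set w" by (auto dest: set_subseq)
    then obtain X Y where XY: "w = X @ 1 # Y" "1 \<notin> set Y" using split_list_last by metis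
    have "\<exists>X'. X = X' @ [0]"
      using zero_before_last_one[of X Y] w XY unfolding avoiders_def by simp
    then obtain X' where "X = X' @ [0]" by blast
    with XY have w_eq: "w = X' @ 0 # 1 # Y" and w_ins: "w = insert_zero (X' @ 1 # Y)"
      by (simp_all add: insert_zero_split)
    from w w_eq have "X' @ 1 # Y \<in> avoiders m h (Suc k)"
      using delete_zero_mem_avoiders by simp
    then show "w \<in> insert_zero ` avoiders m h (Suc k)" unfolding w_ins by (rule imageI)
  qed
  then show ?thesis using card_image[OF inj] by simp
qed

section \<open>The recursion\<close>

(* Splitting by whether some 0 precedes a 1 gives the recursion for the counts. *)
lemma card_avoiders_Suc:
  assumes m: "m \<ge> 1"
  shows "card (avoiders m h (Suc k)) =
    (if h = 0 then 0 else card (avoiders m (h - 1) (Suc k))) + card (avoiders m (h + m) k)"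
proof -
  let ?W = "avoiders m h (Suc k)"
  let ?A = "{w \<in> ?W. \<not> subseq [0,1] w}" and ?B = "{w \<in> ?W. subseq [0,1] w}"
  have fin: "finite ?A" "finite ?B" using finite_avoiders[of m h "Suc k"] by simp_all
  have "card ?W = card (?A \<union> ?B)" by (rule arg_cong[where f = card]) auto
  also have "\<dots> = card ?A + card ?B" by (rule card_Un_disjoint[OF fin]) auto
  finally have "card ?W = card ?A + card ?B" .
  moreover have "card ?B = (if h = 0 then 0 else card (avoiders m (h - 1) (Suc k)))"
  proof (cases h)
    case 0
    then have B: "?B = {}" unfolding avoiders_def by (auto dest!: set_subseq simp: count_list_0_iff)
    show ?thesis unfolding B using 0 by simp
  next
    case (Suc h')
    with card_avoiders_with_01[OF m, of h' k] show ?thesis by simp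
  qed
  ultimately show ?thesis using card_avoiders_without_01[of m h k] by simp
qed

section \<open>The closed form\<close>

definition avoider_number :: "nat \<Rightarrow> nat \<Rightarrow> nat \<Rightarrow> real" where
  "avoider_number m h k =
     real (h + 1) / real ((m + 1) * k + h + 1) * real (((m + 1) * k + h + 1) choose k)"

lemma avoider_number_Suc:
  "avoider_number m h (Suc k) =
    (if h = 0 then 0 else avoider_number m (h - 1) (Suc k)) + avoider_number m (h + m) k"
proof -
  define L where "L = (m + 1) * Suc k + h"
  define P Q R where "P = real (L choose k)" and "Q = real (L choose Suc k)"
    and "R = real (Suc L choose Suc k)"
  have L_pos: "real L > 0" unfolding L_def by (simp only: of_nat_0_less_iff) simp
  have L_real: "real L = real (m + 1) * real (k + 1) + real h"
    unfolding L_def by (simp add: algebra_simps)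
  have pascal: "R = P + Q"
    unfolding P_def Q_def R_def by (simp only: binomial_Suc_Suc of_nat_add)
  have "real (Suc L * (L choose k)) = real ((Suc L choose Suc k) * Suc k)"
    by (simp only: Suc_times_binomial_eq)
  then have absorb: "(real L + 1) * P = real (k + 1) * R"
    unfolding P_def R_def by (simp add: algebra_simps)
  have idx_lhs: "(m + 1) * Suc k + h + 1 = Suc L" unfolding L_def by simp
  have lhs: "avoider_number m h (Suc k) = real (h + 1) / real (Suc L) * R"
    unfolding avoider_number_def R_def idx_lhs by (rule refl)
  have first: "(if h = 0 then 0 else avoider_number m (h - 1) (Suc k)) = real h / real L * Q"
  proof (cases h)
    case (Suc h')
    then have idx: "(m + 1) * Suc k + h' + 1 = L" unfolding L_def by simp
    show ?thesis unfolding Suc diff_Suc_1 avoider_number_def Q_def idx by simp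
  qed simp
  have idx_second: "(m + 1) * k + (h + m) + 1 = L" unfolding L_def by simp
  have second: "avoider_number m (h + m) k = real (h + m + 1) / real L * P"
    unfolding avoider_number_def P_def idx_second by (rule refl)
  have "(real L + 1) * (real h * Q + real (h + m + 1) * P)
      = (real L + 1) * real h * R + real (m + 1) * ((real L + 1) * P)"
    using pascal by (simp add: algebra_simps)
  also have "\<dots> = (real L + 1) * real h * R + (real L - real h) * R"
    using absorb L_real by (simp add: algebra_simps)
  also have "\<dots> = real (h + 1) * real L * R" by (simp add: algebra_simps)
  finally have key: "(real L + 1) * (real h * Q + real (h + m + 1) * P) = real (h + 1) * real L * R" .
  show ?thesis
    unfolding lhs first second of_nat_Suc using key L_pos
    by (simp add: field_simps)
qed

theorem card_avoiders:
  assumes m: "m \<ge> 1"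
  shows "real (card (avoiders m h k)) = avoider_number m h k"
proof (induction k arbitrary: h)
  case 0
  then show ?case by (simp add: avoiders_0 avoider_number_def)
next
  case (Suc k)
  (* both sides obey the same recursion, whose first summand lowers h *)
  show ?case
    using Suc.IH by (induction h) (simp_all add: card_avoiders_Suc[OF m] avoider_number_Suc)
qed

lemma binomial_Suc_over_Suc:
  assumes "n \<le> N"
  shows "real (Suc N choose n) / real (Suc N) = real (N choose n) / real (Suc N - n)"
proof -
  have "real (Suc N - n) * real (Suc N choose n) = real (Suc N) * real (N choose n)"
    using binomial_absorb_comp[of "Suc N" n] by (metis diff_Suc_1 of_nat_mult)
  moreover have "Suc N - n > 0" using assms by simp
  ultimately show ?thesis by (simp add: field_simps)
qed

theorem mainTheorem8:
  fixes n m :: nat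
  assumes "m \<ge> 1"
  shows "real (s_count n m {[1,2,2], [1,3,2]}) =
           1 / (real (m * n) + 1) * real (((m + 1) * n) choose n)"
proof -
  define N where "N = (m + 1) * n"
  have "real (s_count n m {[1,2,2], [1,3,2]}) = avoider_number m 0 n"
    using s_count_eq_card_avoiders card_avoiders[OF assms] by simp
  also have "\<dots> = real (Suc N choose n) / real (Suc N)"
    unfolding avoider_number_def N_def by (simp add: Suc_eq_plus1)
  also have "\<dots> = real (N choose n) / real (m * n + 1)"
  proof -
    have "n \<le> N" "Suc N - n = m * n + 1" unfolding N_def by (simp_all add: algebra_simps)
    then show ?thesis using binomial_Suc_over_Suc by metis
  qed
  finally show ?thesis unfolding N_def by simp
qed

end
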